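(* Let $x,y\in[-2^l,2^l]$ be integers and let $\llbracket x\rrbracket,\llbracket y\rrbracket$ be FastPai encryptions of $x,y$ held by $S_0$. Run protocol $\mathtt{SCMP}_{\mathrm{HSS}}$: (i) $S_0$ picks integers $r_1\in\{1,\dots,2^\sigma-1\}$ and $r_2$ with $r_2\le N/2$ and $r_1+r_2>N/2$, and a bit $\pi\in\{0,1\}$. If $\pi=0$ it sets $D=(\llbracket x\rrbracket\cdot\llbracket y\rrbracket^{-1}\cdot\llbracket 1\rrbracket)^{r_1}\bmod N^2$, else $D=(\llbracket y\rrbracket\cdot\llbracket x\rrbracket^{-1})^{r_1}\bmod N^2$. It computes $z_0=\mathrm{DDLog}_N(D^{\langle 2\alpha\rangle_0}\bmod N^2)-r_2$ and sends $(D,z_0)$ to $S_1$. (ii) $S_1$ computes $z_1=\mathrm{DDLog}_N(D^{\langle 2\alpha\rangle_1}\bmod N^2)$ and $d=z_1-z_0\bmod N\in[0,N)$; it sets $\llbracket\mu_0\rrbracket=\llbracket 0\rrbracket$ if $d>N/2$ and $\llbracket\mu_0\rrbracket=\llbracket 1\rrbracket$ if $d\le N/2$, and sends $\llbracket\mu_0\rrbracket$ to $S_0$. (iii) If $\pi=0$, $S_0$ sets $\llbracket\mu\rrbracket=\llbracket\mu_0\rrbracket$, else $\llbracket\mu\rrbracket=\llbracket 1\rrbracket\cdot\llbracket\mu_0\rrbracket^{-1}\bmod N^2$; finally it sets $\llbracket\mu\rrbracket\leftarrow\llbracket\mu\rrbracket\cdot\llbracket 0\rrbracket\bmod N^2$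 and outputs it. Then the output $\llbracket\mu\rrbracket$ is an encryption of $0$ if $x\ge y$ and an encryption of $1$ if $x<y$ (i.e. $\mathrm{Dec}(\llbracket\mu\rrbracket)=0$ if $x\ge y$ and $=1$ if $x<y$).
   Context: FastPai: for a security parameter $\kappa$, $l(\kappa)=4\kappa$. $N=PQ$ with $P,Q$ primes of $n(\kappa)/2$ bits, $p,q$ odd primes of $l(\kappa)/2$ bits, $p\mid P-1$, $q\mid Q-1$, $P\equiv Q\equiv3\pmod4$, $\gcd(P-1,Q-1)=2$, $\gcd(pq,(P-1)(Q-1)/(4pq))=1$. Private key $\alpha=pq$ (an $l(\kappa)$-bit number); $\beta=(P-1)(Q-1)/(4pq)$; $h=-y_0^{2\beta}\bmod N$ for random $y_0\in\mathbb{Z}_N^*$; public key $(N,h)$. $\mathrm{Enc}(m)=(1+N)^m(h^r\bmod N)^N\bmod N^2$, $r$ uniform in $\{0,1\}^{l(\kappa)}$, written $\llbracket m\rrbracket$; $\mathrm{Dec}(c)=L(c^{2\alpha}\bmod N^2)(2\alpha)^{-1}\bmod N$, $L(u)=(u-1)/N$. Negative integers $m$ are encoded as $N-|m|$. Ciphertext inverses and exponentiations are in $\mathbb{Z}_{N^2}^*$. $\mathrm{DDLog}_N(g)=\lfloor g/N\rfloor\cdot(g\bmod N)^{-1}\bmod N$ for $g\in[0,N^2)$ with $g\bmod N$ invertible mod $N$. $\langle 2\alpha\rangle_0,\langle 2\alpha\rangle_1$ are integers held by $S_0$, $S_1$ respectively with $\langle 2\alpha\rangle_1-\langle 2\alpha\rangle_0=2\alpha$;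 $\llbracket 0\rrbracket,\llbracket 1\rrbracket$ are encryptions of $0,1$ known to both servers. $\sigma$ is a parameter (e.g. $\sigma=128$). Standing parameter assumption: $N/2>2^{l+1+\sigma+l(\kappa)+1}+2^{\sigma+l(\kappa)+1}$ (the paper's parameters, e.g. $|N|=3072$, $l(\kappa)=512$, $\sigma=128$, $l=32$, satisfy this). *)

theory Defs
  imports Main "HOL-Number_Theory.Modular_Inverse"
begin

definition zpow_mod :: "int \<Rightarrow> int \<Rightarrow> int \<Rightarrow> int" where
  "zpow_mod M a e = (if e \<ge> 0 then a ^ nat e mod M
                     else (modular_inverse M a) ^ nat (- e) mod M)"

text \<open>FastPai encryption with explicit randomness r; the message m is
  an element of Z_N (negative integers are encoded as their residue mod N).\<close>
definition fp_enc :: "int \<Rightarrow> int \<Rightarrow> int \<Rightarrow> int \<Rightarrow> int" where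
  "fp_enc N h m r = ((1 + N) ^ nat (m mod N) * ((h ^ nat r) mod N) ^ nat N) mod (N^2)"

definition fp_L :: "int \<Rightarrow> int \<Rightarrow> int" where
  "fp_L N u = (u - 1) div N"

definition fp_dec :: "int \<Rightarrow> int \<Rightarrow> int \<Rightarrow> int" where
  "fp_dec N alpha c =
     (fp_L N (c ^ nat (2 * alpha) mod (N^2)) * modular_inverse N (2 * alpha)) mod N"

definition DDLog :: "int \<Rightarrow> int \<Rightarrow> int" where
  "DDLog N g = ((g div N) * modular_inverse N (g mod N)) mod N"

text \<open>Inputs: N, the public encryptions c0 = [[0]], c1 = [[1]],
  the shares s0 (of S_0) and s1 (of S_1), the ciphertexts cx, cy, and S_0's
  random choices r1, r2, pi (pi in {0,1}).\<close>
definition scmp_hss ::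
  "int \<Rightarrow> int \<Rightarrow> int \<Rightarrow> int \<Rightarrow> int \<Rightarrow> int \<Rightarrow> int \<Rightarrow> nat \<Rightarrow> int \<Rightarrow> nat \<Rightarrow> int" where
  "scmp_hss N c0 c1 s0 s1 cx cy r1 r2 pi =
    (let N2 = N^2;
         \<comment> \<open>step (i), server S_0\<close>
         D = (if pi = 0
              then ((cx * modular_inverse N2 cy mod N2) * c1 mod N2) ^ r1 mod N2
              else (cy * modular_inverse N2 cx mod N2) ^ r1 mod N2);
         z0 = DDLog N (zpow_mod N2 D s0) - r2;
         \<comment> \<open>step (ii), server S_1\<close>
         z1 = DDLog N (zpow_mod N2 D s1);
         d = (z1 - z0) mod N;
         mu0 = (if 2 * d > N then c0 else c1);
         \<comment> \<open>step (iii), server S_0\<close>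
         mu = (if pi = 0 then mu0 else (c1 * modular_inverse N2 mu0) mod N2)
     in (mu * c0) mod N2)"

end

(* Raising a FastPai ciphertext of m to a = 2pq kills its randomness, since h has order
   dividing 2pq modulo N; what remains is 1 + a m N modulo N^2, and this invariant is
   preserved by products, powers and inverses. So the blinded difference D encrypts
   r1 * Delta with Delta = x - y + 1 (resp. y - x), and because the shares of 2 alpha differ
   by a, the two DDLog values of D differ by a r1 Delta modulo N. The size of N guarantees
   that the masked value a r1 Delta + r2 does not wrap around modulo N, so d > N/2 exactly
   when Delta > 0; decryption with 2 alpha = a then recovers the comparison bit. *)
theory Submission
  imports Defs "HOL-Number_Theory.Number_Theory"
begin

lemma cong_one_plus_mult_power:
  fixes k N :: int
  shows "[(1 + k * N) ^ j = 1 + int j * k * N] (mod N\<^sup>2)"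
proof (induction j)
  case 0
  show ?case by simp
next
  case (Suc j)
  have "[(1 + k * N) ^ Suc j = (1 + int j * k * N) * (1 + k * N)] (mod N\<^sup>2)"
    using cong_mult[OF Suc cong_refl] by (simp add: mult.commute)
  also have "(1 + int j * k * N) * (1 + k * N) = 1 + int (Suc j) * k * N + (int j * k * k) * N\<^sup>2"
    by (simp add: algebra_simps power2_eq_square)
  also have "[\<dots> = 1 + int (Suc j) * k * N] (mod N\<^sup>2)"
    by (simp add: cong_iff_dvd_diff)
  finally show ?case .
qed

lemma cong_power_modulus_one:
  fixes w N :: int
  assumes "[w = 1] (mod N)" "0 \<le> N"
  shows "[w ^ nat N = 1] (mod N\<^sup>2)"
proof -
  obtain k where "w = 1 + k * N"
    using assms(1) by (metis cong_iff_dvd_diff dvd_def diff_eq_eq mult.commute add.commute)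
  moreover have "[(1 + k * N) ^ nat N = 1 + k * N\<^sup>2] (mod N\<^sup>2)"
    using cong_one_plus_mult_power[of k N "nat N"] assms(2) by (simp add: power2_eq_square ac_simps)
  moreover have "[1 + k * N\<^sup>2 = 1] (mod N\<^sup>2)"
    by (simp add: cong_iff_dvd_diff)
  ultimately show ?thesis
    using cong_trans by blast
qed

lemma cong_square_modulus_imp_cong:
  fixes a b N :: int
  shows "[a = b] (mod N\<^sup>2) \<Longrightarrow> [a = b] (mod N)"
  by (simp add: cong_dvd_modulus power2_eq_square)

lemma cong_one_plus_mult_modulus:
  fixes x y N :: int
  assumes "[x = y] (mod N)"
  shows "[1 + x * N = 1 + y * N] (mod N\<^sup>2)"
proof -
  have "N * N dvd (x - y) * N"
    using assms by (simp add: cong_iff_dvd_diff)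
  then show ?thesis
    by (simp add: cong_iff_dvd_diff power2_eq_square left_diff_distrib)
qed

lemma zpow_mod_add_one:
  fixes M c e :: int
  assumes "coprime c M"
  shows "[zpow_mod M c (e + 1) = zpow_mod M c e * c] (mod M)"
proof (cases "0 \<le> e")
  case True
  then have "nat (e + 1) = Suc (nat e)" by simp
  with True show ?thesis
    by (simp add: zpow_mod_def cong_def mod_mult_right_eq mult.commute)
next
  case False
  define i where "i = modular_inverse M c"
  have "nat (- e) = Suc (nat (- (e + 1)))" using False by simp
  then have "[zpow_mod M c e * c = i ^ nat (- (e + 1)) * (i * c)] (mod M)"
    using False by (simp add: zpow_mod_def i_def cong_def mod_mult_right_eq mult_ac)
  also have "[i ^ nat (- (e + 1)) * (i * c) = i ^ nat (- (e + 1)) * 1] (mod M)"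
    unfolding i_def using assms by (intro cong_mult cong_refl cong_modular_inverse2)
  finally have "[zpow_mod M c e * c = i ^ nat (- (e + 1))] (mod M)"
    by simp
  with False show ?thesis
    by (simp add: zpow_mod_def i_def cong_def)
qed

lemma zpow_mod_add:
  fixes M c e :: int
  assumes "coprime c M"
  shows "[zpow_mod M c (e + int k) = zpow_mod M c e * c ^ k] (mod M)"
proof (induction k)
  case 0
  show ?case by (simp add: zpow_mod_def cong_def)
next
  case (Suc k)
  have "[zpow_mod M c (e + int k + 1) = zpow_mod M c (e + int k) * c] (mod M)"
    by (rule zpow_mod_add_one[OF assms])
  also have "[zpow_mod M c (e + int k) * c = zpow_mod M c e * c ^ k * c] (mod M)"
    by (intro cong_mult Suc cong_refl)
  finally show ?case
    by (simp add: ac_simps)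
qed

lemma DDLog_mult_one_plus:
  fixes N g0 g1 k :: int
  assumes "1 < N" "coprime g0 N" "[g1 = g0 * (1 + k * N)] (mod N\<^sup>2)"
  shows "[DDLog N g1 = DDLog N g0 + k] (mod N)"
proof -
  define A where "A = g0 mod N"
  define B0 where "B0 = g0 div N"
  define B1 where "B1 = g1 div N"
  define I where "I = modular_inverse N A"
  have "[g1 = g0 * (1 + k * N)] (mod N)"
    using assms(3) by (rule cong_square_modulus_imp_cong)
  also have "[g0 * (1 + k * N) = g0] (mod N)"
    by (simp add: cong_iff_dvd_diff algebra_simps)
  finally have low: "g1 mod N = A"
    by (simp add: A_def cong_def)
  have g0: "g0 = A + B0 * N"
    by (simp add: A_def B0_def)
  have g1: "g1 = A + B1 * N"
    by (simp add: B1_def flip: low)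
  have "g1 - g0 * (1 + k * N) = (B1 - B0 - A * k) * N - (B0 * k) * N\<^sup>2"
    unfolding g0 g1 by (simp add: algebra_simps power2_eq_square)
  with assms(3) have "N\<^sup>2 dvd (B1 - B0 - A * k) * N"
    by (metis cong_iff_dvd_diff dvd_add_left_iff dvd_triv_right diff_add_cancel)
  then have "N dvd B1 - B0 - A * k"
    using assms(1) by (simp add: power2_eq_square)
  then have high: "[B1 = B0 + A * k] (mod N)"
    by (simp add: cong_iff_dvd_diff diff_diff_eq)
  have AI: "[A * I = 1] (mod N)"
    unfolding A_def I_def using assms(1,2) by (intro cong_modular_inverse1) (simp add: coprime_mod_left_iff)
  have "[B1 * I = (B0 + A * k) * I] (mod N)"
    using high by (rule cong_mult[OF _ cong_refl])
  also have "(B0 + A * k) * I = B0 * I + (A * I) * k"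
    by (simp add: algebra_simps)
  also have "[B0 * I + (A * I) * k = B0 * I + 1 * k] (mod N)"
    using AI by (intro cong_add cong_mult cong_refl)
  finally show ?thesis
    by (simp add: DDLog_def low flip: A_def B0_def B1_def I_def) (simp add: cong_def mod_add_left_eq)
qed

text \<open>Raising a FastPai ciphertext of m to a multiple a of the order of its randomness leaves
  1 + a m N modulo N^2. This is all that decryption and DDLog see, and unlike the ciphertext
  itself it is preserved by the homomorphic operations without tracking the randomness.\<close>
definition paillier_ct :: "int \<Rightarrow> nat \<Rightarrow> int \<Rightarrow> int \<Rightarrow> bool" where
  "paillier_ct N a c m \<longleftrightarrow> coprime c N \<and> [c ^ a = 1 + int a * m * N] (mod N\<^sup>2)"

lemma paillier_ct_fp_enc:
  fixes N h m r :: int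
  assumes "1 < N" "coprime h N" "[h ^ a = 1] (mod N)"
  shows "paillier_ct N a (fp_enc N h m r) m"
proof -
  define w where "w = h ^ nat r mod N"
  define k where "k = nat (m mod N)"
  have cw: "coprime w N"
    unfolding w_def using assms(1,2) by (simp add: coprime_mod_left_iff)
  have "[w ^ a = (h ^ a) ^ nat r] (mod N)"
    by (simp add: w_def cong_def power_mod flip: power_mult) (simp add: mult.commute)
  also have "[(h ^ a) ^ nat r = 1] (mod N)"
    using cong_pow[OF assms(3)] by simp
  finally have "[(w ^ a) ^ nat N = 1] (mod N\<^sup>2)"
    using assms(1) by (intro cong_power_modulus_one) auto
  then have "[(1 + N) ^ (k * a) * (w ^ a) ^ nat N = 1 + int (k * a) * N] (mod N\<^sup>2)"
    using cong_mult[OF cong_one_plus_mult_power[of 1 N "k * a"]] by fastforce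
  moreover have "[fp_enc N h m r ^ a = ((1 + N) ^ k * w ^ nat N) ^ a] (mod N\<^sup>2)"
    unfolding fp_enc_def w_def[symmetric] k_def[symmetric] cong_def by (simp add: power_mod)
  moreover have "((1 + N) ^ k * w ^ nat N) ^ a = (1 + N) ^ (k * a) * (w ^ a) ^ nat N"
    by (metis power_mult power_mult_distrib mult.commute)
  moreover have "[1 + int (k * a) * N = 1 + int a * m * N] (mod N\<^sup>2)"
    using assms(1) by (intro cong_one_plus_mult_modulus)
      (simp add: k_def cong_def mod_mult_left_eq mult.commute[of "int a"])
  ultimately have "[fp_enc N h m r ^ a = 1 + int a * m * N] (mod N\<^sup>2)"
    by (metis cong_trans)
  moreover have "coprime (fp_enc N h m r) N"
  proof -
    have "coprime ((1 + N) ^ k * w ^ nat N) N"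
      using cw by (simp add: add.commute[of 1])
    then show ?thesis
      unfolding fp_enc_def w_def[symmetric] k_def[symmetric]
      by (metis cong_imp_coprime cong_mod_left cong_refl cong_square_modulus_imp_cong cong_sym)
  qed
  ultimately show ?thesis
    by (simp add: paillier_ct_def)
qed

lemma paillier_ct_mod:
  "paillier_ct N a c m \<Longrightarrow> paillier_ct N a (c mod N\<^sup>2) m"
  unfolding paillier_ct_def
  by (metis cong_imp_coprime cong_mod_left cong_pow cong_refl cong_square_modulus_imp_cong cong_sym
      cong_trans)

lemma paillier_ct_mult:
  assumes "paillier_ct N a c1 m1" "paillier_ct N a c2 m2"
  shows "paillier_ct N a (c1 * c2 mod N\<^sup>2) (m1 + m2)"
proof -
  have "[(c1 * c2) ^ a = (1 + int a * m1 * N) * (1 + int a * m2 * N)] (mod N\<^sup>2)"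
    using assms by (simp add: paillier_ct_def power_mult_distrib cong_mult)
  also have "(1 + int a * m1 * N) * (1 + int a * m2 * N)
      = 1 + int a * (m1 + m2) * N + (int a * int a * m1 * m2) * N\<^sup>2"
    by (simp add: algebra_simps power2_eq_square)
  also have "[\<dots> = 1 + int a * (m1 + m2) * N] (mod N\<^sup>2)"
    by (simp add: cong_iff_dvd_diff)
  finally show ?thesis
    using assms by (intro paillier_ct_mod) (simp add: paillier_ct_def)
qed

lemma paillier_ct_power:
  assumes "paillier_ct N a c m"
  shows "paillier_ct N a (c ^ k mod N\<^sup>2) (int k * m)"
proof -
  have "(c ^ k) ^ a = (c ^ a) ^ k"
    by (metis mult.commute power_mult)
  also have "[\<dots> = (1 + (int a * m) * N) ^ k] (mod N\<^sup>2)"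
    using assms by (simp add: paillier_ct_def cong_pow mult.assoc)
  also have "[(1 + (int a * m) * N) ^ k = 1 + int a * (int k * m) * N] (mod N\<^sup>2)"
    using cong_one_plus_mult_power[of "int a * m" N k] by (simp add: ac_simps)
  finally show ?thesis
    using assms by (intro paillier_ct_mod) (simp add: paillier_ct_def)
qed

lemma paillier_ct_inverse:
  assumes "paillier_ct N a c m"
  shows "paillier_ct N a (modular_inverse (N\<^sup>2) c) (- m)"
proof -
  define i where "i = modular_inverse (N\<^sup>2) c"
  have c: "coprime c (N\<^sup>2)"
    using assms by (simp add: paillier_ct_def)
  have ic: "[i ^ a * c ^ a = 1] (mod N\<^sup>2)"
    using cong_pow[OF cong_modular_inverse2[OF c], of a] by (simp add: i_def power_mult_distrib)
  have "[i ^ a = i ^ a * ((1 + int a * m * N) * (1 - int a * m * N))] (mod N\<^sup>2)"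
    by (simp add: cong_iff_dvd_diff algebra_simps power2_eq_square)
  also have "[i ^ a * ((1 + int a * m * N) * (1 - int a * m * N)) = i ^ a * c ^ a * (1 - int a * m * N)] (mod N\<^sup>2)"
    using assms unfolding paillier_ct_def mult.assoc by (intro cong_mult cong_refl) (simp add: cong_sym)
  also have "[i ^ a * c ^ a * (1 - int a * m * N) = 1 * (1 - int a * m * N)] (mod N\<^sup>2)"
    using ic by (rule cong_mult[OF _ cong_refl])
  finally have "[i ^ a = 1 * (1 - int a * m * N)] (mod N\<^sup>2)" .
  moreover have "coprime i N"
    using coprime_modular_inverse[OF c] by (simp add: i_def)
  ultimately show ?thesis
    by (simp add: paillier_ct_def i_def)
qed

lemma paillier_ct_zpow_mod:
  assumes "paillier_ct N a c m"
  shows "paillier_ct N a (zpow_mod (N\<^sup>2) c e) (e * m)"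
  using paillier_ct_power[OF assms, of "nat e"] paillier_ct_power[OF paillier_ct_inverse[OF assms], of "nat (- e)"]
  by (cases "0 \<le> e") (simp_all add: zpow_mod_def)

lemma fp_dec_paillier_ct:
  fixes N alpha c m :: int
  assumes "paillier_ct N (nat (2 * alpha)) c m" "1 < N" "0 < alpha" "coprime (2 * alpha) N"
    and "0 \<le> m" "m < N"
  shows "fp_dec N alpha c = m"
proof -
  define u where "u = c ^ nat (2 * alpha) mod N\<^sup>2"
  define r where "r = 2 * alpha * m mod N"
  have "[u = 1 + 2 * alpha * m * N] (mod N\<^sup>2)"
    using assms(1,3) by (simp add: u_def paillier_ct_def cong_mod_left)
  also have "[1 + 2 * alpha * m * N = 1 + r * N] (mod N\<^sup>2)"
    by (intro cong_one_plus_mult_modulus) (simp add: r_def cong_def)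
  finally have "[u = 1 + r * N] (mod N\<^sup>2)" .
  moreover have "0 \<le> r" "r < N"
    using assms(2) by (simp_all add: r_def)
  moreover from this have "r * N \<le> (N - 1) * N"
    using assms(2) by (intro mult_right_mono) auto
  ultimately have "u = 1 + r * N"
    using assms(2) by (simp add: u_def cong_def power2_eq_square algebra_simps)
  then have "fp_dec N alpha c = r * modular_inverse N (2 * alpha) mod N"
    using assms(2) by (simp add: fp_dec_def fp_L_def flip: u_def)
  also have "\<dots> = (2 * alpha * modular_inverse N (2 * alpha)) * m mod N"
    by (simp only: r_def mod_mult_left_eq) (simp add: ac_simps)
  also have "\<dots> = 1 * m mod N"
    using cong_mult[OF cong_modular_inverse1[OF assms(4)] cong_refl[of m]] by (simp add: cong_def)
  finally show ?thesis
    using assms(5,6) by simp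
qed

lemma DDLog_zpow_mod_share_diff:
  fixes N D t s0 s1 :: int
  assumes "1 < N" "paillier_ct N a D t" "s1 = s0 + int a"
  shows "[DDLog N (zpow_mod (N\<^sup>2) D s1) = DDLog N (zpow_mod (N\<^sup>2) D s0) + int a * t] (mod N)"
proof (rule DDLog_mult_one_plus[OF assms(1)])
  show "coprime (zpow_mod (N\<^sup>2) D s0) N"
    using paillier_ct_zpow_mod[OF assms(2)] by (simp add: paillier_ct_def)
  have "[zpow_mod (N\<^sup>2) D s1 = zpow_mod (N\<^sup>2) D s0 * D ^ a] (mod N\<^sup>2)"
    unfolding assms(3) using assms(2) by (intro zpow_mod_add) (simp add: paillier_ct_def)
  also have "[zpow_mod (N\<^sup>2) D s0 * D ^ a = zpow_mod (N\<^sup>2) D s0 * (1 + int a * t * N)] (mod N\<^sup>2)"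
    using assms(2) by (intro cong_mult cong_refl) (simp add: paillier_ct_def)
  finally show "[zpow_mod (N\<^sup>2) D s1 = zpow_mod (N\<^sup>2) D s0 * (1 + int a * t * N)] (mod N\<^sup>2)" .
qed

lemma masked_threshold_iff_pos:
  fixes N r1 r2 F :: int
  assumes "2 * (\<bar>r1 * F\<bar> + r1) < N" "2 * r2 \<le> N" "N < 2 * (r1 + r2)" "0 \<le> r1"
  shows "N < 2 * ((r1 * F + r2) mod N) \<longleftrightarrow> 0 < F"
proof (cases "0 < F")
  case True
  then have "r1 \<le> r1 * F"
    using assms(4) by (simp add: mult_le_cancel_left1)
  moreover have "\<bar>r1 * F\<bar> = r1 * F"
    using \<open>r1 \<le> r1 * F\<close> assms(4) by simp
  ultimately have "(r1 * F + r2) mod N = r1 * F + r2"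
    using assms by (intro mod_pos_pos_trivial) arith+
  with \<open>r1 \<le> r1 * F\<close> show ?thesis
    using True assms(3) by simp
next
  case False
  then have "r1 * F \<le> 0"
    using assms(4) by (simp add: mult_nonneg_nonpos)
  moreover have "\<bar>r1 * F\<bar> = - (r1 * F)"
    using \<open>r1 * F \<le> 0\<close> by simp
  ultimately have "(r1 * F + r2) mod N = r1 * F + r2"
    using assms by (intro mod_pos_pos_trivial) arith+
  with \<open>r1 * F \<le> 0\<close> show ?thesis
    using False assms(2) by simp
qed

lemma scmp_comparison_bit:
  fixes N D \<Delta> s0 s1 r2 :: int and r1 :: nat
  assumes "1 < N" "paillier_ct N a D (int r1 * \<Delta>)" "s1 = s0 + int a" "1 \<le> a"
    and "2 * r2 \<le> N" "N < 2 * (int r1 + r2)" "2 * (int a * int r1 * \<bar>\<Delta>\<bar> + int r1) < N"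
  shows "N < 2 * ((DDLog N (zpow_mod (N\<^sup>2) D s1) - (DDLog N (zpow_mod (N\<^sup>2) D s0) - r2)) mod N)
    \<longleftrightarrow> 0 < \<Delta>"
proof -
  define z0 where "z0 = DDLog N (zpow_mod (N\<^sup>2) D s0)"
  have "[DDLog N (zpow_mod (N\<^sup>2) D s1) - (z0 - r2) = (z0 + int a * (int r1 * \<Delta>)) - (z0 - r2)] (mod N)"
    unfolding z0_def by (intro cong_diff cong_refl DDLog_zpow_mod_share_diff assms(1-3))
  then have "(DDLog N (zpow_mod (N\<^sup>2) D s1) - (z0 - r2)) mod N = (int r1 * (int a * \<Delta>) + r2) mod N"
    by (simp add: cong_def algebra_simps)
  moreover have "N < 2 * ((int r1 * (int a * \<Delta>) + r2) mod N) \<longleftrightarrow> 0 < int a * \<Delta>"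
    using assms(5-7) by (intro masked_threshold_iff_pos) (simp_all add: abs_mult ac_simps)
  ultimately show ?thesis
    using assms(4) by (simp add: z0_def zero_less_mult_iff)
qed

lemma scmp_hss_paillier_ct:
  fixes N cx cy c0 c1 s0 s1 x y r2 X :: int and r1 pi :: nat
  assumes N: "1 < N"
    and ct: "paillier_ct N a cx x" "paillier_ct N a cy y" "paillier_ct N a c0 0" "paillier_ct N a c1 1"
    and shares: "s1 = s0 + int a" and a: "1 \<le> a"
    and pi: "pi \<in> {0, 1}"
    and r2: "2 * r2 \<le> N" "N < 2 * (int r1 + r2)"
    and xy: "\<bar>x\<bar> \<le> X" "\<bar>y\<bar> \<le> X"
    and bound: "2 * (int a * int r1 * (2 * X + 1) + int r1) < N"
  shows "paillier_ct N a (scmp_hss N c0 c1 s0 s1 cx cy r1 r2 pi) (if y \<le> x then 0 else 1)"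
proof -
  have bit: "N < 2 * ((DDLog N (zpow_mod (N\<^sup>2) D s1) - (DDLog N (zpow_mod (N\<^sup>2) D s0) - r2)) mod N)
      \<longleftrightarrow> 0 < \<Delta>"
    if "paillier_ct N a D (int r1 * \<Delta>)" "\<bar>\<Delta>\<bar> \<le> 2 * X + 1" for D \<Delta>
  proof (rule scmp_comparison_bit[OF N that(1) shares a r2])
    have "int a * int r1 * \<bar>\<Delta>\<bar> \<le> int a * int r1 * (2 * X + 1)"
      using that(2) by (intro mult_left_mono) auto
    then show "2 * (int a * int r1 * \<bar>\<Delta>\<bar> + int r1) < N"
      using bound by arith
  qed
  show ?thesis
  proof (cases "pi = 0")
    case True
    define D where "D = ((cx * modular_inverse (N\<^sup>2) cy mod N\<^sup>2) * c1 mod N\<^sup>2) ^ r1 mod N\<^sup>2"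
    have "paillier_ct N a D (int r1 * (x + - y + 1))"
      unfolding D_def by (intro paillier_ct_power paillier_ct_mult paillier_ct_inverse ct)
    from bit[OF this] xy have "N < 2 * ((DDLog N (zpow_mod (N\<^sup>2) D s1)
        - (DDLog N (zpow_mod (N\<^sup>2) D s0) - r2)) mod N) \<longleftrightarrow> y \<le> x"
      by (simp add: abs_le_iff)
    then have "scmp_hss N c0 c1 s0 s1 cx cy r1 r2 pi = (if y \<le> x then c0 else c1) * c0 mod N\<^sup>2"
      using True by (simp add: scmp_hss_def Let_def flip: D_def)
    moreover have "paillier_ct N a ((if y \<le> x then c0 else c1) * c0 mod N\<^sup>2) ((if y \<le> x then 0 else 1) + 0)"
      using ct by (intro paillier_ct_mult) simp_all
    ultimately show ?thesis
      by simp
  next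
    case False
    define D where "D = (cy * modular_inverse (N\<^sup>2) cx mod N\<^sup>2) ^ r1 mod N\<^sup>2"
    have "paillier_ct N a D (int r1 * (y + - x))"
      unfolding D_def by (intro paillier_ct_power paillier_ct_mult paillier_ct_inverse ct)
    from bit[OF this] xy have "N < 2 * ((DDLog N (zpow_mod (N\<^sup>2) D s1)
        - (DDLog N (zpow_mod (N\<^sup>2) D s0) - r2)) mod N) \<longleftrightarrow> x < y"
      by (simp add: abs_le_iff)
    then have "scmp_hss N c0 c1 s0 s1 cx cy r1 r2 pi
        = (c1 * modular_inverse (N\<^sup>2) (if x < y then c0 else c1) mod N\<^sup>2) * c0 mod N\<^sup>2"
      using False pi by (simp add: scmp_hss_def Let_def flip: D_def)
    moreover have "paillier_ct N a ((c1 * modular_inverse (N\<^sup>2) (if x < y then c0 else c1) mod N\<^sup>2) * c0 mod N\<^sup>2)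
        ((1 + - (if x < y then 0 else 1)) + 0)"
      using ct by (intro paillier_ct_mult paillier_ct_inverse) simp_all
    ultimately show ?thesis
      by (cases "x < y") simp_all
  qed
qed

lemma cong_power_semiprime_totient:
  fixes P Q y :: int
  assumes "prime P" "prime Q" "P \<noteq> Q" "coprime y (P * Q)"
  shows "[y ^ (nat (P - 1) * nat (Q - 1)) = 1] (mod P * Q)"
proof -
  have P: "prime (nat P)" "1 < P" and Q: "prime (nat Q)" "1 < Q"
    using assms(1,2) prime_int_nat_transfer prime_gt_1_int by blast+
  have "nat P \<noteq> nat Q"
    using assms(3) P(2) Q(2) by simp
  then have "coprime (nat P) (nat Q)"
    using P(1) Q(1) primes_coprime by blast
  then have "totient (nat (P * Q)) = nat (P - 1) * nat (Q - 1)"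
    using P Q by (simp add: nat_mult_distrib totient_mult_coprime totient_prime nat_diff_distrib)
  moreover have "residues (P * Q)"
    using P(2) Q(2) by (simp add: residues_def less_1_mult)
  ultimately show ?thesis
    using residues.euler_theorem[OF _ assms(4)] by metis
qed

lemma double_dvd_pred:
  fixes p P :: int
  assumes "odd p" "odd P" "p dvd P - 1"
  shows "2 * p dvd P - 1"
  using assms by (intro divides_mult) auto

lemma less_double_if_bit_length_le:
  fixes p q :: int
  assumes "p < 2 ^ k" "2 ^ (k - 1) \<le> q"
  shows "p < 2 * q"
proof -
  have "(2::int) ^ k \<le> 2 * 2 ^ (k - 1)"
    by (cases k) simp_all
  with assms show ?thesis
    by linarith
qed

lemma neq_if_gcd_pred_eq_two:
  fixes p P Q :: int
  assumes "prime p" "odd p" "p dvd P - 1" "gcd (P - 1) (Q - 1) = 2"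
  shows "P \<noteq> Q"
proof
  assume "P = Q"
  with assms(3,4) have "p dvd 2"
    by (metis gcd_greatest)
  then have "p \<le> 2"
    by (rule zdvd_imp_le) simp
  with assms(1,2) show False
    using prime_ge_2_int[of p] by (cases "p = 2") auto
qed

lemma fastpai_exponent_coprime:
  fixes P Q p q :: int
  assumes "prime P" "prime Q" "prime p" "prime q" "odd P" "odd Q" "odd p" "odd q"
    and "p dvd P - 1" "q dvd Q - 1" "p < 2 * q" "q < 2 * p"
  shows "coprime (2 * (p * q)) (P * Q)"
proof -
  have "coprime p P" "coprime q Q"
    using assms(9,10) coprime_diff_one_left coprime_divisors dvd_refl by blast+
  moreover have "p \<noteq> Q" \<comment> \<open>otherwise 2 q divides p - 1\<close>
    using zdvd_imp_le[OF double_dvd_pred[OF assms(8,6,10)]] assms(2,11) prime_gt_1_int by force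
  then have "coprime p Q"
    using assms(2,3) primes_coprime by blast
  moreover have "q \<noteq> P" \<comment> \<open>otherwise 2 p divides q - 1\<close>
    using zdvd_imp_le[OF double_dvd_pred[OF assms(7,5,9)]] assms(1,12) prime_gt_1_int by force
  then have "coprime q P"
    using assms(1,4) primes_coprime by blast
  ultimately show ?thesis
    using assms(5,6) by (simp add: coprime_commute)
qed

lemma fastpai_h_power_exponent:
  fixes P Q p q y0 :: int
  assumes "prime P" "prime Q" "P \<noteq> Q" "odd P" "odd Q" "odd p" "odd q" "0 < p" "0 < q"
    and "p dvd P - 1" "q dvd Q - 1" "coprime y0 (P * Q)"
  shows "[(- (y0 ^ nat (2 * ((P - 1) * (Q - 1) div (4 * p * q)))) mod (P * Q)) ^ nat (2 * (p * q)) = 1]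
    (mod P * Q)"
proof -
  define \<beta> where "\<beta> = (P - 1) * (Q - 1) div (4 * p * q)"
  have "1 < P" "1 < Q"
    using assms(1,2) prime_gt_1_int by blast+
  have "4 * p * q dvd (P - 1) * (Q - 1)"
    using mult_dvd_mono[OF double_dvd_pred[OF assms(6,4,10)] double_dvd_pred[OF assms(7,5,11)]]
    by (simp add: ac_simps)
  then have "\<beta> * (4 * p * q) = (P - 1) * (Q - 1)"
    unfolding \<beta>_def by (rule dvd_div_mult_self)
  then have \<beta>: "2 * \<beta> * (2 * (p * q)) = (P - 1) * (Q - 1)"
    by (simp add: algebra_simps)
  have "0 \<le> \<beta>"
    using \<open>1 < P\<close> \<open>1 < Q\<close> assms(8,9) by (simp add: \<beta>_def pos_imp_zdiv_nonneg_iff)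
  have "[(- (y0 ^ nat (2 * \<beta>)) mod (P * Q)) ^ nat (2 * (p * q)) = (- (y0 ^ nat (2 * \<beta>))) ^ nat (2 * (p * q))]
      (mod P * Q)"
    by (simp add: cong_def power_mod)
  also have "(- (y0 ^ nat (2 * \<beta>))) ^ nat (2 * (p * q)) = y0 ^ (nat (2 * \<beta>) * nat (2 * (p * q)))"
    using assms(8,9) by (simp add: power_mult even_nat_iff)
  also have "nat (2 * \<beta>) * nat (2 * (p * q)) = nat (P - 1) * nat (Q - 1)"
    using \<beta> \<open>0 \<le> \<beta>\<close> \<open>1 < P\<close> \<open>1 < Q\<close> by (simp flip: nat_mult_distrib)
  also have "[y0 ^ (nat (P - 1) * nat (Q - 1)) = 1] (mod P * Q)"
    using assms(1-3,12) by (rule cong_power_semiprime_totient)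
  finally show ?thesis
    by (simp add: \<beta>_def)
qed

lemma fastpai_comparison_bound:
  fixes p q N :: int and r1 \<kappa> l \<sigma> :: nat
  assumes "0 < p" "p < 2 ^ (2 * \<kappa>)" "0 < q" "q < 2 ^ (2 * \<kappa>)" "r1 \<le> 2 ^ \<sigma> - 1"
    and "2 * (2 ^ (l + 1 + \<sigma> + 4 * \<kappa> + 1) + 2 ^ (\<sigma> + 4 * \<kappa> + 1)) < N"
  shows "2 * (2 * (p * q) * int r1 * (2 * 2 ^ l + 1) + int r1) < N"
proof -
  have "r1 < 2 ^ \<sigma>"
    using assms(5) by (metis One_nat_def Suc_pred le_imp_less_Suc pos2 zero_less_power)
  then have "int r1 < 2 ^ \<sigma>"
    by (metis of_nat_less_iff of_nat_numeral of_nat_power)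
  define K :: int where "K = 2 ^ (4 * \<kappa> + 1)"
  define L :: int where "L = 2 * 2 ^ l + 1"
  have "p * q < 2 ^ (2 * \<kappa>) * 2 ^ (2 * \<kappa>)"
    using assms(1-4) by (intro mult_strict_mono) auto
  then have "2 * (p * q) + 1 \<le> K"
    by (simp add: K_def flip: power_add)
  have "2 * (p * q) * int r1 * L + int r1 = int r1 * (2 * (p * q) * L + 1)"
    by (simp add: algebra_simps)
  also have "\<dots> \<le> int r1 * (K * L)"
  proof (rule mult_left_mono)
    have "2 * (p * q) * L + 1 \<le> (2 * (p * q) + 1) * L"
      by (simp add: L_def algebra_simps)
    also have "\<dots> \<le> K * L"
      using \<open>2 * (p * q) + 1 \<le> K\<close> by (intro mult_right_mono) (simp_all add: L_def)
    finally show "2 * (p * q) * L + 1 \<le> K * L" .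
  qed simp
  also have "\<dots> < 2 ^ \<sigma> * (K * L)"
    using \<open>int r1 < 2 ^ \<sigma>\<close> by (intro mult_strict_right_mono) (simp_all add: K_def L_def)
  also have "2 ^ \<sigma> * (K * L) = 2 ^ (l + 1 + \<sigma> + 4 * \<kappa> + 1) + 2 ^ (\<sigma> + 4 * \<kappa> + 1)"
    by (simp add: K_def L_def algebra_simps flip: power_add)
  finally show ?thesis
    using assms(6) by (simp add: L_def)
qed

theorem theorem2:
  fixes \<kappa> n l \<sigma> :: nat
    and P Q p q y0 s0 s1 x y rx ry rz ro cx cy c0 c1 r2 :: int
    and r1 pi :: nat
  assumes PQ_prime: "prime P" "prime Q"
    and PQ_bits: "2 ^ (n div 2 - 1) \<le> P" "P < 2 ^ (n div 2)"
                 "2 ^ (n div 2 - 1) \<le> Q" "Q < 2 ^ (n div 2)"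
    and pq_prime: "prime p" "prime q" "odd p" "odd q"
    and pq_bits: "2 ^ (2 * \<kappa> - 1) \<le> p" "p < 2 ^ (2 * \<kappa>)"
                 "2 ^ (2 * \<kappa> - 1) \<le> q" "q < 2 ^ (2 * \<kappa>)"
    and pq_dvd: "p dvd P - 1" "q dvd Q - 1"
    and PQ_mod4: "P mod 4 = 3" "Q mod 4 = 3"
    and gcd_PQ: "gcd (P - 1) (Q - 1) = 2"
    and gcd_beta: "gcd (p * q) ((P - 1) * (Q - 1) div (4 * p * q)) = 1"
    and y0: "y0 \<in> {0..<P * Q}" "coprime y0 (P * Q)"
    and param: "2 * (2 ^ (l + 1 + \<sigma> + 4 * \<kappa> + 1) + 2 ^ (\<sigma> + 4 * \<kappa> + 1)) < P * Q"
    and shares: "s1 - s0 = 2 * (p * q)"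
    and rand: "rx \<in> {0..<2 ^ (4 * \<kappa>)}" "ry \<in> {0..<2 ^ (4 * \<kappa>)}"
              "rz \<in> {0..<2 ^ (4 * \<kappa>)}" "ro \<in> {0..<2 ^ (4 * \<kappa>)}"
    and xy: "\<bar>x\<bar> \<le> 2 ^ l" "\<bar>y\<bar> \<le> 2 ^ l"
    and ct: "cx = fp_enc (P * Q) (- (y0 ^ nat (2 * ((P - 1) * (Q - 1) div (4 * p * q)))) mod (P * Q)) x rx"
            "cy = fp_enc (P * Q) (- (y0 ^ nat (2 * ((P - 1) * (Q - 1) div (4 * p * q)))) mod (P * Q)) y ry"
            "c0 = fp_enc (P * Q) (- (y0 ^ nat (2 * ((P - 1) * (Q - 1) div (4 * p * q)))) mod (P * Q)) 0 rz"
            "c1 = fp_enc (P * Q) (- (y0 ^ nat (2 * ((P - 1) * (Q - 1) div (4 * p * q)))) mod (P * Q)) 1 ro"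
    and r1: "1 \<le> r1" "r1 \<le> 2 ^ \<sigma> - 1"
    and r2: "2 * r2 \<le> P * Q" "2 * (int r1 + r2) > P * Q"
    and pi: "pi \<in> {0, 1}"
  shows "fp_dec (P * Q) (p * q) (scmp_hss (P * Q) c0 c1 s0 s1 cx cy r1 r2 pi)
           = (if x \<ge> y then 0 else 1)"
proof -
  define N where "N = P * Q"
  define a where "a = nat (2 * (p * q))"
  define h where "h = - (y0 ^ nat (2 * ((P - 1) * (Q - 1) div (4 * p * q)))) mod N"
  have "1 < P" "1 < Q" "1 < p" "1 < q"
    using PQ_prime pq_prime by (simp_all add: prime_gt_1_int)
  then have N: "1 < N" and "1 < p * q"
    by (simp_all add: N_def less_1_mult)
  then have a: "int a = 2 * (p * q)" "1 \<le> a"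
    by (simp_all add: a_def)
  have odd: "odd P" "odd Q"
    using PQ_mod4 by (simp_all add: odd_iff_mod_2_eq_one flip: mod_mod_cancel[of 2 4])
  have "p < 2 * q" "q < 2 * p"
    using pq_bits by (simp_all add: less_double_if_bit_length_le)
  then have "coprime (2 * (p * q)) N"
    unfolding N_def using PQ_prime pq_prime odd pq_dvd by (intro fastpai_exponent_coprime)
  have "[h ^ a = 1] (mod N)"
    unfolding h_def N_def a_def using PQ_prime odd pq_prime \<open>1 < p\<close> \<open>1 < q\<close> pq_dvd y0(2)
    by (intro fastpai_h_power_exponent neq_if_gcd_pred_eq_two[OF _ _ _ gcd_PQ]) simp_all
  moreover have "coprime h N"
    unfolding h_def N_def using y0(2) \<open>1 < P\<close> \<open>1 < Q\<close> by (subst coprime_mod_left_iff) simp_all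
  ultimately have "paillier_ct N a (fp_enc N h m r) m" for m r
    using N by (intro paillier_ct_fp_enc)
  then have "paillier_ct N a cx x" "paillier_ct N a cy y" "paillier_ct N a c0 0" "paillier_ct N a c1 1"
    unfolding ct N_def[symmetric] h_def[symmetric] by simp_all
  moreover have "2 * (int a * int r1 * (2 * 2 ^ l + 1) + int r1) < N"
    using \<open>1 < p\<close> \<open>1 < q\<close> pq_bits(2,4) r1(2) param unfolding a(1) N_def
    by (intro fastpai_comparison_bound) simp_all
  ultimately have "paillier_ct N a (scmp_hss N c0 c1 s0 s1 cx cy r1 r2 pi) (if y \<le> x then 0 else 1)"
    using N a shares xy pi r2 by (intro scmp_hss_paillier_ct[where X = "2 ^ l"]) (simp_all add: N_def)
  then show ?thesis
    using N \<open>1 < p\<close> \<open>1 < q\<close> \<open>coprime (2 * (p * q)) N\<close>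
    by (intro fp_dec_paillier_ct) (simp_all add: a_def N_def)
qed

end
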